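(* Let $1<p<\infty$, $\frac1p+\frac1q=1$, let $a,b$ be as in the context, and let $w=(w_n)_{n\ge0}$ be nonzero complex numbers with $$\sup_{n\ge0}\Big|\frac{w_na_n}{a_{n+1}}\Big|<\infty\quad\text{and}\quad\limsup_{n\to\infty}\Big|\frac{b_n}{a_{n+1}}\Big|<1 .$$ Identify $(\ell^p_{a,b})^*$ with $\ell^q(\mathbb{N}_0)$ via $L\mapsto(L(f_n))_{n\ge0}$. Then the following are equivalent: (i) $F_w^*$ is not hypercyclic on $(\ell^p_{a,b})^*$; (ii) for every $L\in(\ell^p_{a,b})^*$ (equivalently every $u\in\ell^q(\mathbb{N}_0)$) the sequence $\big((F_w^* )^\nu L\big)(f_n)=L(F_w^\nu f_n)$, i.e. the image of $u$ under the $\nu$-th power of the matrix of $F_w^*$ with respect to $\{f_n^*\}$, tends to $0$ in $\mathbb{C}^{\mathbb{N}_0}$ (coordinatewise) as $\nu\to\infty$; that is, $L(F_w^\nu f_n)\to0$ as $\nu\to\infty$ for every $n\ge0$.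
   Context: Let $a=(a_n)_{n\ge0}$, $b=(b_n)_{n\ge0}$ be sequences of nonzero complex numbers with $\limsup_{n\to\infty}(|a_n|+|b_n|)^{1/n}<\infty$, and let $R=1/\limsup_{n}(|a_n|+|b_n|)^{1/n}\in(0,\infty]$. For $n\ge0$ let $f_n(z)=(a_n+b_nz)z^n$. For $1\le p<\infty$, $\ell^p_{a,b}$ is the space of analytic functions on $\{|z|<R\}$ of the form $f=\sum_{n\ge0}\lambda_nf_n$ with $(\lambda_n)\in\ell^p(\mathbb{N}_0)$ (the series converges locally uniformly on $\{|z|<R\}$ and the $\lambda_n$ are uniquely determined by $f$), normed by $\|f\|=(\sum_n|\lambda_n|^p)^{1/p}$. $f_n^*$ are the coordinate functionals $f_n^*(\sum_j\lambda_jf_j)=\lambda_n$. The weighted forward shift is $F_w\big(\sum_{n\ge0}\mu_nz^n\big)=\sum_{n\ge0}\mu_nw_nz^{n+1}$ (bounded on $\ell^p_{a,b}$ under the hypotheses); $F_w^*$ is its adjoint. $\mathbb{C}^{\mathbb{N}_0}$ carries the topology of coordinatewise convergence. Hypercyclic means having a dense orbit. *)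

theory Defs
  imports "HOL-Analysis.Analysis" "HOL-Library.Liminf_Limsup"
begin

text \<open>Elements of the space of analytic functions are represented by their
Taylor coefficient sequences (an analytic function on a disc is determined by
them).  Taylor coefficients of f_n = (a_n + b_n z) z^n:\<close>
definition fcoef :: "(nat \<Rightarrow> complex) \<Rightarrow> (nat \<Rightarrow> complex) \<Rightarrow> nat \<Rightarrow> nat \<Rightarrow> complex" where
  "fcoef a b n k = (if k = n then a n else if k = Suc n then b n else 0)"

definition Fw :: "(nat \<Rightarrow> complex) \<Rightarrow> (nat \<Rightarrow> complex) \<Rightarrow> nat \<Rightarrow> complex" where
  "Fw w \<mu> k = (if k = 0 then 0 else \<mu> (k - 1) * w (k - 1))"

text \<open>Coordinates lambda_n = f_n^*(f) of the function with Taylor coefficients mu: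
  mu_n = lambda_n a_n + lambda_(n-1) b_(n-1) determines lambda uniquely.\<close>
primrec abcoord :: "(nat \<Rightarrow> complex) \<Rightarrow> (nat \<Rightarrow> complex) \<Rightarrow> (nat \<Rightarrow> complex) \<Rightarrow> nat \<Rightarrow> complex" where
  "abcoord a b \<mu> 0 = \<mu> 0 / a 0"
| "abcoord a b \<mu> (Suc n) = (\<mu> (Suc n) - abcoord a b \<mu> n * b n) / a (Suc n)"

text \<open>The functional L_u on l^p_{a,b} corresponding to u in l^q:
  L_u(sum lambda_j f_j) = sum lambda_j u_j, so that L_u(f_n) = u_n.\<close>
definition dualpair :: "(nat \<Rightarrow> complex) \<Rightarrow> (nat \<Rightarrow> complex) \<Rightarrow> (nat \<Rightarrow> complex) \<Rightarrow> (nat \<Rightarrow> complex) \<Rightarrow> complex" where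
  "dualpair a b \<mu> u = (\<Sum>j. abcoord a b \<mu> j * u j)"

text \<open>The adjoint F_w^* transported to l^q: (F_w^* L)(f_n) = L(F_w f_n).\<close>
definition Fw_adj :: "(nat \<Rightarrow> complex) \<Rightarrow> (nat \<Rightarrow> complex) \<Rightarrow> (nat \<Rightarrow> complex) \<Rightarrow> (nat \<Rightarrow> complex) \<Rightarrow> nat \<Rightarrow> complex" where
  "Fw_adj a b w u n = dualpair a b (Fw w (fcoef a b n)) u"

definition in_lq :: "real \<Rightarrow> (nat \<Rightarrow> complex) \<Rightarrow> bool" where
  "in_lq q u \<longleftrightarrow> summable (\<lambda>n. norm (u n) powr q)"

definition lq_norm :: "real \<Rightarrow> (nat \<Rightarrow> complex) \<Rightarrow> real" where
  "lq_norm q u = (\<Sum>n. norm (u n) powr q) powr (1 / q)"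

definition hypercyclic_lq :: "real \<Rightarrow> ((nat \<Rightarrow> complex) \<Rightarrow> (nat \<Rightarrow> complex)) \<Rightarrow> bool" where
  "hypercyclic_lq q T \<longleftrightarrow>
     (\<exists>u. in_lq q u \<and> (\<forall>v. in_lq q v \<longrightarrow> (\<forall>\<epsilon>>0. \<exists>\<nu>. lq_norm q ((T ^^ \<nu>) u - v) < \<epsilon>)))"

end

theory Submission
  imports Defs
begin

text \<open>Put c n = b n / a (n+1) and beta n = w n a n / a (n+1). In the coordinates given by the
  basis f_n, F_w^* becomes P B P^{-1} on l^q, where P v = (v n + c n v (n+1))_n and B is the
  backward shift with weights beta. Since limsup |c n| < 1, the products of the c n decay
  geometrically, so P is an isomorphism of l^q with inverse given by a geometric series.
  Thus F_w^* is hypercyclic iff B is, and by Salas' construction this happens iff the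
  weight products beta 0 ... beta (n-1) are unbounded. If they are bounded, each coordinate of
  every orbit of B, hence of F_w^*, tends to 0; conversely a dense orbit is unbounded in the
  coordinate 0.\<close>

definition lq_powsum :: "real \<Rightarrow> (nat \<Rightarrow> complex) \<Rightarrow> real" where
  "lq_powsum q x = (\<Sum>n. norm (x n) powr q)"

lemma lq_norm_eq_powsum: "lq_norm q x = lq_powsum q x powr (1 / q)"
  by (simp add: lq_norm_def lq_powsum_def)

lemma lq_powsum_nonneg: "in_lq q x \<Longrightarrow> 0 \<le> lq_powsum q x"
  unfolding in_lq_def lq_powsum_def by (intro suminf_nonneg) auto

lemma in_lq_comparison:
  assumes g: "in_lq q g" and le: "\<And>n. norm (f n) powr q \<le> A * norm (g n) powr q"
  shows "in_lq q f" and "lq_powsum q f \<le> A * lq_powsum q g"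
proof -
  have sg: "summable (\<lambda>n. A * norm (g n) powr q)"
    using g unfolding in_lq_def by (rule summable_mult)
  show sf: "in_lq q f"
    unfolding in_lq_def by (rule summable_comparison_test[OF _ sg]) (use le in auto)
  show "lq_powsum q f \<le> A * lq_powsum q g"
    using suminf_le[OF le sf[unfolded in_lq_def] sg] g
    unfolding lq_powsum_def in_lq_def by (simp add: suminf_mult)
qed

lemma norm_add_powr_le:
  fixes s t :: "'a :: real_normed_vector"
  assumes "q > 0"
  shows "norm (s + t) powr q \<le> 2 powr q * (norm s powr q + norm t powr q)"
proof -
  have "norm (s + t) powr q \<le> (2 * max (norm s) (norm t)) powr q"
    using assms by (intro powr_mono2) (auto intro: order_trans[OF norm_triangle_ineq])
  also have "\<dots> = 2 powr q * max (norm s) (norm t) powr q"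
    by (simp add: powr_mult)
  also have "max (norm s) (norm t) powr q \<le> norm s powr q + norm t powr q"
    by (simp add: max_def)
  finally show ?thesis by (simp add: mult_left_mono)
qed

lemma in_lq_add:
  assumes q: "q > 0" and x: "in_lq q x" and y: "in_lq q y"
  shows "in_lq q (\<lambda>n. x n + y n)"
    and "lq_powsum q (\<lambda>n. x n + y n) \<le> 2 powr q * (lq_powsum q x + lq_powsum q y)"
proof -
  let ?s = "\<lambda>n. 2 powr q * (norm (x n) powr q + norm (y n) powr q)"
  have s: "summable ?s"
    using x y unfolding in_lq_def by (intro summable_mult summable_add)
  have le: "norm (x n + y n) powr q \<le> ?s n" for n
    by (rule norm_add_powr_le[OF q])
  show xy: "in_lq q (\<lambda>n. x n + y n)"
    unfolding in_lq_def by (rule summable_comparison_test[OF _ s]) (use le in auto)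
  have "lq_powsum q (\<lambda>n. x n + y n) \<le> suminf ?s"
    unfolding lq_powsum_def by (rule suminf_le[OF le xy[unfolded in_lq_def] s])
  also have "\<dots> = 2 powr q * (lq_powsum q x + lq_powsum q y)"
    using x y unfolding lq_powsum_def in_lq_def
    by (simp add: suminf_mult summable_add suminf_add)
  finally show "lq_powsum q (\<lambda>n. x n + y n) \<le> 2 powr q * (lq_powsum q x + lq_powsum q y)" .
qed

lemma in_lq_uminus [simp]: "in_lq q (- x) \<longleftrightarrow> in_lq q x"
  by (simp add: in_lq_def)

lemma lq_powsum_uminus [simp]: "lq_powsum q (- x) = lq_powsum q x"
  by (simp add: lq_powsum_def)

lemma in_lq_diff:
  assumes "q > 0" "in_lq q x" "in_lq q y"
  shows "in_lq q (x - y)"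
    and "lq_powsum q (x - y) \<le> 2 powr q * (lq_powsum q x + lq_powsum q y)"
  using in_lq_add[of q x "- y"] assms by (simp_all add: fun_diff_def)

lemma in_lq_shift:
  assumes "in_lq q x"
  shows "in_lq q (\<lambda>n. x (n + m))" and "lq_powsum q (\<lambda>n. x (n + m)) \<le> lq_powsum q x"
proof -
  have s: "summable (\<lambda>n. norm (x n) powr q)" using assms unfolding in_lq_def .
  show "in_lq q (\<lambda>n. x (n + m))"
    using s unfolding in_lq_def by (rule summable_ignore_initial_segment)
  have "(\<Sum>i<m. norm (x i) powr q) \<ge> 0" by (intro sum_nonneg) auto
  then show "lq_powsum q (\<lambda>n. x (n + m)) \<le> lq_powsum q x"
    unfolding lq_powsum_def suminf_split_initial_segment[OF s, of m] by simp
qed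

lemma norm_powr_le_lq_powsum:
  assumes "in_lq q x" shows "norm (x n) powr q \<le> lq_powsum q x"
  using sum_le_suminf[of "\<lambda>n. norm (x n) powr q" "{n}"] assms
  unfolding lq_powsum_def in_lq_def by auto

lemma norm_le_lq_norm:
  assumes "q > 0" "in_lq q x" shows "norm (x n) \<le> lq_norm q x"
proof -
  have "norm (x n) = (norm (x n) powr q) powr (1 / q)"
    using assms by (simp add: powr_powr)
  also have "\<dots> \<le> lq_norm q x"
    unfolding lq_norm_eq_powsum using assms norm_powr_le_lq_powsum by (intro powr_mono2) auto
  finally show ?thesis .
qed

lemma lq_norm_less:
  assumes "q > 0" "e > 0" "in_lq q x" "lq_powsum q x < e powr q"
  shows "lq_norm q x < e"
proof -
  have "lq_norm q x < (e powr q) powr (1 / q)"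
    unfolding lq_norm_eq_powsum using assms lq_powsum_nonneg by (intro powr_less_mono2) auto
  then show ?thesis using assms by (simp add: powr_powr)
qed

lemma in_lq_if_partial_sums_bounded:
  assumes "\<And>K. (\<Sum>n<K. norm (x n) powr q) \<le> C"
  shows "in_lq q x" and "lq_powsum q x \<le> C"
proof -
  have s: "summable (\<lambda>n. norm (x n) powr q)"
    by (rule summableI_nonneg_bounded[OF _ assms]) auto
  then show "in_lq q x" unfolding in_lq_def .
  show "lq_powsum q x \<le> C" unfolding lq_powsum_def by (rule suminf_le_const[OF s assms])
qed

lemma in_lq_LIMSEQ_zero:
  assumes "q > 0" "in_lq q x" shows "x \<longlonglongrightarrow> 0"
proof -
  have "(\<lambda>n. norm (x n) powr q) \<longlonglongrightarrow> 0"
    using assms(2) unfolding in_lq_def by (rule summable_LIMSEQ_zero)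
  then have "(\<lambda>n. (norm (x n) powr q) powr (1 / q)) \<longlonglongrightarrow> 0 powr (1 / q)"
    using assms by (intro tendsto_powr') auto
  then show ?thesis using assms by (simp add: powr_powr tendsto_norm_zero_iff)
qed

lemma in_lq_Bseq: "q > 0 \<Longrightarrow> in_lq q x \<Longrightarrow> Bseq x"
  using in_lq_LIMSEQ_zero convergent_imp_Bseq convergentI by blast

lemma in_lq_finite_support:
  assumes "finite S" "\<And>n. n \<notin> S \<Longrightarrow> x n = 0"
  shows "in_lq q x" and "lq_powsum q x = (\<Sum>n\<in>S. norm (x n) powr q)"
  using summable_finite[of S "\<lambda>n. norm (x n) powr q"] suminf_finite[of S "\<lambda>n. norm (x n) powr q"] assms
  unfolding in_lq_def lq_powsum_def by auto

lemma in_lq_disjoint_suminf: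
  assumes disj: "\<And>i j k. x i k \<noteq> 0 \<Longrightarrow> x j k \<noteq> 0 \<Longrightarrow> i = j"
    and x: "\<And>i. in_lq q (x i)" and s: "summable (\<lambda>i. lq_powsum q (x i))"
  shows "in_lq q (\<lambda>k. \<Sum>i. x i k)" and "lq_powsum q (\<lambda>k. \<Sum>i. x i k) \<le> (\<Sum>i. lq_powsum q (x i))"
proof -
  have single: "norm (\<Sum>i. x i k) powr q = (\<Sum>i. norm (x i k) powr q)"
    and summable: "summable (\<lambda>i. norm (x i k) powr q)" for k
  proof -
    obtain i0 where i0: "\<And>i. i \<noteq> i0 \<Longrightarrow> x i k = 0"
      using disj by (cases "\<exists>i. x i k \<noteq> 0") auto
    show "summable (\<lambda>i. norm (x i k) powr q)" by (rule summable_finite[of "{i0}"]) (use i0 in auto)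
    show "norm (\<Sum>i. x i k) powr q = (\<Sum>i. norm (x i k) powr q)"
      using i0 by (subst (1 2) suminf_finite[of "{i0}"]) auto
  qed
  have "(\<Sum>k<K. norm (\<Sum>i. x i k) powr q) \<le> (\<Sum>i. lq_powsum q (x i))" for K
  proof -
    have "(\<Sum>k<K. norm (\<Sum>i. x i k) powr q) = (\<Sum>i. \<Sum>k<K. norm (x i k) powr q)"
      unfolding single by (rule suminf_sum[symmetric]) (rule summable)
    also have "\<dots> \<le> (\<Sum>i. lq_powsum q (x i))"
    proof (rule suminf_le[OF _ _ s])
      show "(\<Sum>k<K. norm (x i k) powr q) \<le> lq_powsum q (x i)" for i
        using x[of i] unfolding lq_powsum_def in_lq_def by (intro sum_le_suminf) auto
      show "summable (\<lambda>i. \<Sum>k<K. norm (x i k) powr q)" by (intro summable_sum summable)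
    qed
    finally show ?thesis .
  qed
  then show "in_lq q (\<lambda>k. \<Sum>i. x i k)" and "lq_powsum q (\<lambda>k. \<Sum>i. x i k) \<le> (\<Sum>i. lq_powsum q (x i))"
    by (rule in_lq_if_partial_sums_bounded)+
qed

lemma suminf_disjoint_split:
  fixes x :: "nat \<Rightarrow> nat \<Rightarrow> complex"
  assumes disj: "\<And>i j. x i k \<noteq> 0 \<Longrightarrow> x j k \<noteq> 0 \<Longrightarrow> i = j"
    and below: "\<And>i. i < j \<Longrightarrow> x i k = 0"
  shows "(\<Sum>i. x i k) = x j k + (\<Sum>i. x (i + Suc j) k)"
proof -
  obtain i0 where i0: "\<And>i. i \<noteq> i0 \<Longrightarrow> x i k = 0"
    using disj by (cases "\<exists>i. x i k \<noteq> 0") auto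
  have "summable (\<lambda>i. x i k)" by (rule summable_finite[of "{i0}"]) (use i0 in auto)
  then have "(\<Sum>i. x i k) = (\<Sum>i. x (i + Suc j) k) + (\<Sum>i<Suc j. x i k)"
    by (rule suminf_split_initial_segment)
  also have "(\<Sum>i<Suc j. x i k) = x j k" using below by (simp add: sum.neutral)
  finally show ?thesis by simp
qed

lemma hypercyclic_lqI:
  assumes q: "q > 0" and y: "in_lq q y"
    and approx: "\<And>z \<epsilon>. in_lq q z \<Longrightarrow> \<epsilon> > 0 \<Longrightarrow>
      \<exists>\<nu>. in_lq q ((T ^^ \<nu>) y - z) \<and> lq_powsum q ((T ^^ \<nu>) y - z) < \<epsilon>"
  shows "hypercyclic_lq q T"
  unfolding hypercyclic_lq_def
proof (intro exI[of _ y] conjI allI impI y)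
  fix z :: "nat \<Rightarrow> complex" and \<epsilon> :: real
  assume "in_lq q z" "\<epsilon> > 0"
  then obtain \<nu> where "in_lq q ((T ^^ \<nu>) y - z)" "lq_powsum q ((T ^^ \<nu>) y - z) < \<epsilon> powr q"
    using approx[of z "\<epsilon> powr q"] by auto
  then show "\<exists>\<nu>. lq_norm q ((T ^^ \<nu>) y - z) < \<epsilon>"
    using lq_norm_less[OF q \<open>\<epsilon> > 0\<close>] by blast
qed

lemma hypercyclic_lq_imp_unbounded_orbit:
  assumes q: "q > 0" and hc: "hypercyclic_lq q T"
    and T: "\<And>u. in_lq q u \<Longrightarrow> in_lq q (T u)"
  shows "\<exists>u. in_lq q u \<and> \<not> Bseq (\<lambda>\<nu>. (T ^^ \<nu>) u 0)"
proof -
  obtain u where u: "in_lq q u"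
    and dense: "\<And>v \<epsilon>. in_lq q v \<Longrightarrow> \<epsilon> > 0 \<Longrightarrow> \<exists>\<nu>. lq_norm q ((T ^^ \<nu>) u - v) < \<epsilon>"
    using hc unfolding hypercyclic_lq_def by blast
  have "\<not> Bseq (\<lambda>\<nu>. (T ^^ \<nu>) u 0)"
  proof
    assume "Bseq (\<lambda>\<nu>. (T ^^ \<nu>) u 0)"
    then obtain B where B: "\<And>\<nu>. norm ((T ^^ \<nu>) u 0) \<le> B" unfolding Bseq_def by blast
    define v :: "nat \<Rightarrow> complex" where "v n = (if n = 0 then of_real (B + 1) else 0)" for n
    have v: "in_lq q v" by (rule in_lq_finite_support(1)[of "{0}"]) (auto simp: v_def)
    obtain \<nu> where \<nu>: "lq_norm q ((T ^^ \<nu>) u - v) < 1" using dense[OF v zero_less_one] by blast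
    have orbit: "in_lq q ((T ^^ \<nu>) u)" by (induction \<nu>) (simp_all add: u T)
    have "1 \<le> norm (of_real (B + 1) - (T ^^ \<nu>) u 0)"
      using norm_triangle_ineq2[of "of_real (B + 1)" "(T ^^ \<nu>) u 0"] B[of \<nu>] B[of 0] by auto
    also have "\<dots> = norm (((T ^^ \<nu>) u - v) 0)" by (simp add: v_def norm_minus_commute)
    also have "\<dots> \<le> lq_norm q ((T ^^ \<nu>) u - v)"
      by (rule norm_le_lq_norm[OF q in_lq_diff(1)[OF q orbit v]])
    finally show False using \<nu> by simp
  qed
  then show ?thesis using u by blast
qed

definition rat_vec :: "(rat \<times> rat) list \<Rightarrow> nat \<Rightarrow> complex" where
  "rat_vec xs n =
     (if n < length xs then Complex (of_rat (fst (xs ! n))) (of_rat (snd (xs ! n))) else 0)"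

lemma complex_rat_pair_approx:
  assumes "e > 0"
  shows "\<exists>p :: rat \<times> rat. norm (z - Complex (of_rat (fst p)) (of_rat (snd p))) < e"
proof -
  obtain x1 where x1: "Re z - e / 2 < of_rat x1" "of_rat x1 < Re z + e / 2"
    using of_rat_dense[of "Re z - e / 2" "Re z + e / 2"] assms by auto
  obtain x2 where x2: "Im z - e / 2 < of_rat x2" "of_rat x2 < Im z + e / 2"
    using of_rat_dense[of "Im z - e / 2" "Im z + e / 2"] assms by auto
  let ?w = "Complex (of_rat x1) (of_rat x2)"
  have "norm (z - ?w) \<le> \<bar>Re (z - ?w)\<bar> + \<bar>Im (z - ?w)\<bar>" by (rule cmod_le)
  also have "\<dots> < e" using x1 x2 by simp
  finally show ?thesis by (intro exI[of _ "(x1, x2)"]) simp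
qed

lemma rat_vec_dense:
  assumes q: "q > 0" and z: "in_lq q z" and e: "e > 0"
  shows "\<exists>xs. in_lq q (rat_vec xs - z) \<and> lq_powsum q (rat_vec xs - z) < e"
proof -
  have sz: "summable (\<lambda>n. norm (z n) powr q)" using z unfolding in_lq_def .
  obtain D where D: "norm (\<Sum>i. norm (z (i + D)) powr q) < e / 2"
    using suminf_exist_split[OF _ sz, of "e / 2"] e by auto
  define \<eta> where "\<eta> = (e / (2 * (D + 1))) powr (1 / q)"
  have \<eta>: "\<eta> > 0" and \<eta>q: "\<eta> powr q = e / (2 * (D + 1))"
    unfolding \<eta>_def using e q by (auto simp: powr_powr)
  have "\<forall>n. \<exists>p :: rat \<times> rat. norm (z n - Complex (of_rat (fst p)) (of_rat (snd p))) < \<eta>"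
    using complex_rat_pair_approx[OF \<eta>] by blast
  then obtain f where f: "\<And>n. norm (z n - Complex (of_rat (fst (f n))) (of_rat (snd (f n)))) < \<eta>"
    by metis
  define xs where "xs = map f [0..<D]"
  have x: "in_lq q (rat_vec xs)"
    by (rule in_lq_finite_support(1)[of "{..<D}"]) (auto simp: rat_vec_def xs_def)
  have d: "in_lq q (rat_vec xs - z)" by (rule in_lq_diff(1)[OF q x z])
  have "lq_powsum q (rat_vec xs - z) =
      (\<Sum>n. norm ((rat_vec xs - z) (n + D)) powr q) + (\<Sum>n<D. norm ((rat_vec xs - z) n) powr q)"
    unfolding lq_powsum_def by (rule suminf_split_initial_segment) (use d in_lq_def in blast)
  also have "(\<Sum>n. norm ((rat_vec xs - z) (n + D)) powr q) < e / 2"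
    using D by (simp add: rat_vec_def xs_def)
  also have "(\<Sum>n<D. norm ((rat_vec xs - z) n) powr q) \<le> (\<Sum>n<D. e / (2 * (D + 1)))"
  proof (rule sum_mono)
    fix n assume "n \<in> {..<D}"
    then have "norm ((rat_vec xs - z) n) < \<eta>" using f[of n] by (simp add: rat_vec_def xs_def norm_minus_commute)
    then show "norm ((rat_vec xs - z) n) powr q \<le> e / (2 * (D + 1))"
      unfolding \<eta>q[symmetric] using q by (intro powr_mono2) auto
  qed
  also have "\<dots> \<le> e / 2" using e by (simp add: field_simps)
  finally show ?thesis using d by auto
qed

text \<open>Every rational vector occurs at arbitrarily large indices j, via the pairing j = (code, J).\<close>
lemma finitely_supported_dense_enumeration:
  assumes q: "q > 0"
  obtains E :: "nat \<Rightarrow> nat \<Rightarrow> complex" and D :: "nat \<Rightarrow> nat"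
  where "\<And>j n. D j \<le> n \<Longrightarrow> E j n = 0"
    and "\<And>z \<epsilon> J. in_lq q z \<Longrightarrow> \<epsilon> > 0 \<Longrightarrow>
      \<exists>j\<ge>J. in_lq q (E j - z) \<and> lq_powsum q (E j - z) < \<epsilon>"
proof
  let ?xs = "\<lambda>j. from_nat (fst (prod_decode j)) :: (rat \<times> rat) list"
  show "length (?xs j) \<le> n \<Longrightarrow> rat_vec (?xs j) n = 0" for j n by (simp add: rat_vec_def)
  fix z :: "nat \<Rightarrow> complex" and \<epsilon> :: real and J :: nat
  assume "in_lq q z" "\<epsilon> > 0"
  then obtain xs where "in_lq q (rat_vec xs - z)" "lq_powsum q (rat_vec xs - z) < \<epsilon>"
    using rat_vec_dense[OF q] by blast
  moreover have "J \<le> prod_encode (to_nat xs, J)" by (rule le_prod_encode_2)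
  ultimately show "\<exists>j\<ge>J. in_lq q (rat_vec (?xs j) - z) \<and> lq_powsum q (rat_vec (?xs j) - z) < \<epsilon>"
    by (intro exI[of _ "prod_encode (to_nat xs, J)"]) simp
qed

lemma geometric_sum_le_root:
  fixes u :: "nat \<Rightarrow> real"
  assumes q: "q > 0" and s: "0 < s" "s < 1" and u: "\<And>k. 0 \<le> u k"
    and summable: "summable (\<lambda>k. u k powr q)"
  shows "summable (\<lambda>k. s ^ k * u k)"
    and "(\<Sum>k. s ^ k * u k) \<le> (\<Sum>k. u k powr q) powr (1 / q) / (1 - s)"
proof -
  define R where "R = (\<Sum>k. u k powr q) powr (1 / q)"
  have le: "u k \<le> R" for k
  proof -
    have "u k = (u k powr q) powr (1 / q)" using q u[of k] by (simp add: powr_powr)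
    also have "\<dots> \<le> R"
      unfolding R_def using q sum_le_suminf[OF summable, of "{k}"] by (intro powr_mono2) auto
    finally show ?thesis .
  qed
  have geom: "summable (\<lambda>k. R * s ^ k)" using s by (intro summable_mult summable_geometric) auto
  have term_le: "s ^ k * u k \<le> R * s ^ k" for k
    using s le[of k] by (simp add: mult.commute mult_left_mono)
  show sum: "summable (\<lambda>k. s ^ k * u k)"
    by (rule summable_comparison_test[OF _ geom]) (use term_le s u in auto)
  have "(\<Sum>k. s ^ k * u k) \<le> (\<Sum>k. R * s ^ k)"
    by (rule suminf_le[OF _ sum geom]) (use term_le in auto)
  also have "\<dots> = R / (1 - s)" using s by (simp add: suminf_mult suminf_geometric)
  finally show "(\<Sum>k. s ^ k * u k) \<le> R / (1 - s)" .
qed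

text \<open>Splitting the geometric weight as (s t)^k with s < 1, the factor s^k makes the series
  converge while t^k is absorbed into a weighted q-th power sum; this works for every q > 0.\<close>
lemma geometric_weighted_sum_powr_le:
  assumes q: "q > 0" and s: "0 < s" "s < 1" and t: "0 < t"
    and summable: "summable (\<lambda>k. (t powr q) ^ k * norm (v k) powr q)"
  shows "(\<Sum>k. (s * t) ^ k * norm (v k)) powr q
    \<le> (\<Sum>k. (t powr q) ^ k * norm (v k) powr q) / (1 - s) powr q"
proof -
  let ?u = "\<lambda>k. t ^ k * norm (v k)"
  let ?S = "\<Sum>k. (t powr q) ^ k * norm (v k) powr q"
  have u_powr: "?u k powr q = (t powr q) ^ k * norm (v k) powr q" for k
    using t by (simp add: powr_mult powr_realpow[symmetric] powr_powr powr_power mult.commute)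
  note root = geometric_sum_le_root[OF q s, of ?u, unfolded u_powr]
  have eq: "(\<Sum>k. (s * t) ^ k * norm (v k)) = (\<Sum>k. s ^ k * ?u k)"
    by (simp add: power_mult_distrib mult.assoc)
  have "0 \<le> (\<Sum>k. s ^ k * ?u k)"
    using root(1) summable s t by (intro suminf_nonneg) auto
  then have "(\<Sum>k. s ^ k * ?u k) powr q \<le> (?S powr (1 / q) / (1 - s)) powr q"
    using root(2) summable t q by (intro powr_mono2) auto
  also have "\<dots> = ?S / (1 - s) powr q"
    using q s summable by (simp add: powr_divide powr_powr suminf_nonneg)
  finally show ?thesis unfolding eq .
qed

lemma geometric_tail_sums_le:
  assumes v: "in_lq q v" and \<rho>: "0 \<le> \<rho>" "\<rho> < 1"
  shows "summable (\<lambda>k. \<rho> ^ k * norm (v (i + k)) powr q)"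
    and "(\<Sum>i<I. \<Sum>k. \<rho> ^ k * norm (v (i + k)) powr q) \<le> lq_powsum q v / (1 - \<rho>)"
proof -
  let ?N = "lq_powsum q v"
  have geom: "summable (\<lambda>k. ?N * \<rho> ^ k)" using \<rho> by (intro summable_mult summable_geometric) auto
  show summable: "summable (\<lambda>k. \<rho> ^ k * norm (v (i + k)) powr q)" for i
  proof (rule summable_comparison_test[OF _ geom], intro exI allI impI)
    show "norm (\<rho> ^ k * norm (v (i + k)) powr q) \<le> ?N * \<rho> ^ k" for k
      using \<rho> norm_powr_le_lq_powsum[OF v] by (simp add: mult.commute mult_left_mono)
  qed
  have "(\<Sum>i<I. \<Sum>k. \<rho> ^ k * norm (v (i + k)) powr q) = (\<Sum>k. \<Sum>i<I. \<rho> ^ k * norm (v (i + k)) powr q)"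
    by (rule suminf_sum[symmetric]) (rule summable)
  also have "\<dots> \<le> (\<Sum>k. ?N * \<rho> ^ k)"
  proof (rule suminf_le[OF _ summable_sum[OF summable] geom])
    fix k
    have "(\<Sum>i<I. norm (v (i + k)) powr q) \<le> lq_powsum q (\<lambda>i. v (i + k))"
      using in_lq_shift(1)[OF v, of k] unfolding lq_powsum_def in_lq_def
      by (intro sum_le_suminf) auto
    also have "\<dots> \<le> ?N" by (rule in_lq_shift(2)[OF v])
    finally show "(\<Sum>i<I. \<rho> ^ k * norm (v (i + k)) powr q) \<le> ?N * \<rho> ^ k"
      using \<rho> by (simp add: sum_distrib_left[symmetric] mult.commute mult_left_mono)
  qed
  also have "\<dots> = ?N / (1 - \<rho>)" using \<rho> by (simp add: suminf_mult suminf_geometric)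
  finally show "(\<Sum>i<I. \<Sum>k. \<rho> ^ k * norm (v (i + k)) powr q) \<le> ?N / (1 - \<rho>)" .
qed

lemma in_lq_geometric_sum:
  assumes q: "q > 0" and v: "in_lq q v" and r: "0 < r" "r < 1" and C: "0 \<le> C"
    and x: "\<And>i. norm (x i) \<le> C * (\<Sum>k. r ^ k * norm (v (i + k)))"
  shows "in_lq q x"
proof -
  define s where "s = (1 + r) / 2"
  define t where "t = r / s"
  have s: "0 < s" "s < 1" "r = s * t" using r unfolding s_def t_def by auto
  have t: "0 < t" "t < 1" using r s unfolding t_def s_def by auto
  have \<rho>: "0 \<le> t powr q" "t powr q < 1" using t q powr_less_mono2[of q t 1] by auto
  define Y where "Y i = (\<Sum>k. (t powr q) ^ k * norm (v (i + k)) powr q)" for i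
  have x_le: "norm (x i) powr q \<le> C powr q / (1 - s) powr q * Y i" for i
  proof -
    have "norm (x i) powr q \<le> (C * (\<Sum>k. (s * t) ^ k * norm (v (i + k)))) powr q"
      using x[of i] q s(3) by (intro powr_mono2) auto
    also have "\<dots> = C powr q * (\<Sum>k. (s * t) ^ k * norm (v (i + k))) powr q"
      by (rule powr_mult)
    also have "\<dots> \<le> C powr q * (Y i / (1 - s) powr q)"
      unfolding Y_def using geometric_tail_sums_le(1)[OF v \<rho>]
      by (intro mult_left_mono geometric_weighted_sum_powr_le[OF q s(1,2) t(1)]) auto
    finally show ?thesis by simp
  qed
  have "(\<Sum>i<I. norm (x i) powr q) \<le> C powr q / (1 - s) powr q * (lq_powsum q v / (1 - t powr q))" for I
  proof -
    have "(\<Sum>i<I. norm (x i) powr q) \<le> (\<Sum>i<I. C powr q / (1 - s) powr q * Y i)"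
      by (intro sum_mono x_le)
    also have "\<dots> \<le> C powr q / (1 - s) powr q * (lq_powsum q v / (1 - t powr q))"
      unfolding sum_distrib_left[symmetric] Y_def
      by (intro mult_left_mono geometric_tail_sums_le(2)[OF v \<rho>]) auto
    finally show ?thesis .
  qed
  then show ?thesis by (rule in_lq_if_partial_sums_bounded)
qed

lemma summable_geometric_weighted:
  assumes "Bseq v" "0 \<le> r" "r < 1"
  shows "summable (\<lambda>k. r ^ k * norm (v (i + k)))"
proof -
  obtain V where V: "\<And>n. norm (v n) \<le> V" using assms(1) unfolding Bseq_def by blast
  have "summable (\<lambda>k. V * r ^ k)" using assms by (intro summable_mult summable_geometric) auto
  moreover have "norm (r ^ k * norm (v (i + k))) \<le> V * r ^ k" for k
  proof -
    have "r ^ k * norm (v (i + k)) \<le> r ^ k * V" by (rule mult_left_mono) (use assms V in auto)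
    then show ?thesis using assms by (simp add: mult.commute)
  qed
  ultimately show ?thesis by (rule summable_comparison_test')
qed

section \<open>The bidiagonal operator and its inverse\<close>

definition bidiag :: "(nat \<Rightarrow> complex) \<Rightarrow> (nat \<Rightarrow> complex) \<Rightarrow> nat \<Rightarrow> complex" where
  "bidiag c v n = v n + c n * v (Suc n)"

definition bidiag_inv_coeff :: "(nat \<Rightarrow> complex) \<Rightarrow> nat \<Rightarrow> nat \<Rightarrow> complex" where
  "bidiag_inv_coeff c i k = (\<Prod>l<k. - c (i + l))"

definition bidiag_inv :: "(nat \<Rightarrow> complex) \<Rightarrow> (nat \<Rightarrow> complex) \<Rightarrow> nat \<Rightarrow> complex" where
  "bidiag_inv c v i = (\<Sum>k. bidiag_inv_coeff c i k * v (i + k))"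

lemma bidiag_inv_coeff_0 [simp]: "bidiag_inv_coeff c i 0 = 1"
  by (simp add: bidiag_inv_coeff_def)

lemma bidiag_inv_coeff_Suc: "bidiag_inv_coeff c i (Suc k) = - c i * bidiag_inv_coeff c (Suc i) k"
  unfolding bidiag_inv_coeff_def by (subst prod.lessThan_Suc_shift) simp

lemma bidiag_inv_coeff_Suc': "bidiag_inv_coeff c i (Suc k) = bidiag_inv_coeff c i k * - c (i + k)"
  by (simp add: bidiag_inv_coeff_def)

locale geometric_products =
  fixes c :: "nat \<Rightarrow> complex" and C r :: real
  assumes r: "0 < r" "r < 1"
    and norm_prod_le: "\<And>i k. norm (\<Prod>l<k. c (i + l)) \<le> C * r ^ k"
begin

lemma C_ge_1: "1 \<le> C"
  using norm_prod_le[of _ 0] by simp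

lemma norm_c_le: "norm (c i) \<le> C * r"
  using norm_prod_le[of i 1] by simp

lemma norm_bidiag_inv_coeff_le: "norm (bidiag_inv_coeff c i k) \<le> C * r ^ k"
  using norm_prod_le[of i k] by (simp add: bidiag_inv_coeff_def prod_norm[symmetric])

lemma norm_bidiag_inv_term_le:
  "norm (bidiag_inv_coeff c i k * v (i + k)) \<le> C * (r ^ k * norm (v (i + k)))"
  using mult_right_mono[OF norm_bidiag_inv_coeff_le norm_ge_zero]
  by (simp add: norm_mult mult.assoc)

lemma bidiag_inv_summable:
  assumes "Bseq v"
  shows "summable (\<lambda>k. norm (bidiag_inv_coeff c i k * v (i + k)))"
proof (rule summable_comparison_test[rotated])
  show "summable (\<lambda>k. C * (r ^ k * norm (v (i + k))))"
    using summable_geometric_weighted[OF assms] r by (intro summable_mult) auto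
  show "\<exists>N. \<forall>k\<ge>N. norm (norm (bidiag_inv_coeff c i k * v (i + k))) \<le> C * (r ^ k * norm (v (i + k)))"
    using norm_bidiag_inv_term_le by simp
qed

lemma norm_bidiag_inv_le:
  assumes "Bseq v"
  shows "norm (bidiag_inv c v i) \<le> C * (\<Sum>k. r ^ k * norm (v (i + k)))"
proof -
  have geom: "summable (\<lambda>k. r ^ k * norm (v (i + k)))"
    using summable_geometric_weighted[OF assms] r by auto
  have "norm (bidiag_inv c v i) \<le> (\<Sum>k. norm (bidiag_inv_coeff c i k * v (i + k)))"
    unfolding bidiag_inv_def by (rule summable_norm[OF bidiag_inv_summable[OF assms]])
  also have "\<dots> \<le> (\<Sum>k. C * (r ^ k * norm (v (i + k))))"
    by (intro suminf_le bidiag_inv_summable[OF assms] summable_mult[OF geom] norm_bidiag_inv_term_le)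
  also have "\<dots> = C * (\<Sum>k. r ^ k * norm (v (i + k)))"
    by (rule suminf_mult[OF geom])
  finally show ?thesis .
qed

lemma bidiag_inv_rec:
  assumes "Bseq v"
  shows "bidiag_inv c v i = v i - c i * bidiag_inv c v (Suc i)"
proof -
  note summable = summable_norm_cancel[OF bidiag_inv_summable[OF assms]]
  have "bidiag_inv c v i = (\<Sum>k. bidiag_inv_coeff c i (Suc k) * v (i + Suc k)) + v i"
    unfolding bidiag_inv_def using suminf_split_head[OF summable[of i]] by simp
  also have "(\<Sum>k. bidiag_inv_coeff c i (Suc k) * v (i + Suc k))
      = (\<Sum>k. - c i * (bidiag_inv_coeff c (Suc i) k * v (Suc i + k)))"
    by (simp add: bidiag_inv_coeff_Suc mult.assoc)
  also have "\<dots> = - c i * bidiag_inv c v (Suc i)"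
    unfolding bidiag_inv_def by (rule suminf_mult[OF summable])
  finally show ?thesis by simp
qed

lemma bidiag_bidiag_inv:
  assumes "Bseq v"
  shows "bidiag c (bidiag_inv c v) = v"
proof
  show "bidiag c (bidiag_inv c v) n = v n" for n
    unfolding bidiag_def bidiag_inv_rec[OF assms, of n] by simp
qed

lemma bidiag_inv_bidiag:
  assumes "z \<longlonglongrightarrow> 0"
  shows "bidiag_inv c (bidiag c z) = z"
proof
  fix i
  obtain V where V: "\<And>n. norm (z n) \<le> V"
    using convergent_imp_Bseq[OF convergentI[OF assms]] unfolding Bseq_def by blast
  have "(\<lambda>k. bidiag_inv_coeff c i k * z (i + k)) \<longlonglongrightarrow> 0"
  proof (rule Lim_null_comparison)
    show "\<forall>\<^sub>F k in sequentially. norm (bidiag_inv_coeff c i k * z (i + k)) \<le> C * (r ^ k * V)"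
    proof (intro always_eventually allI)
      fix k
      have "C * (r ^ k * norm (z (i + k))) \<le> C * (r ^ k * V)"
        using C_ge_1 r V by (intro mult_left_mono) auto
      then show "norm (bidiag_inv_coeff c i k * z (i + k)) \<le> C * (r ^ k * V)"
        using norm_bidiag_inv_term_le order_trans by blast
    qed
    show "(\<lambda>k. C * (r ^ k * V)) \<longlonglongrightarrow> 0"
      using r by (intro tendsto_mult_right_zero tendsto_mult_left_zero LIMSEQ_power_zero) auto
  qed
  then have "(\<lambda>k. bidiag_inv_coeff c i k * z (i + k) - bidiag_inv_coeff c i (Suc k) * z (i + Suc k))
      sums (bidiag_inv_coeff c i 0 * z (i + 0) - 0)"
    by (rule telescope_sums')
  then have "(\<lambda>k. bidiag_inv_coeff c i k * bidiag c z (i + k)) sums z i"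
    by (simp add: bidiag_inv_coeff_Suc' bidiag_def ring_distribs mult.assoc)
  then show "bidiag_inv c (bidiag c z) i = z i"
    unfolding bidiag_inv_def by (rule sums_unique[symmetric])
qed

lemma in_lq_bidiag_inv:
  assumes "q > 0" "in_lq q v"
  shows "in_lq q (bidiag_inv c v)"
  using in_lq_geometric_sum[OF assms r _ norm_bidiag_inv_le] in_lq_Bseq[OF assms] C_ge_1 by simp

lemma in_lq_bidiag:
  assumes q: "q > 0" and v: "in_lq q v"
  shows "in_lq q (bidiag c v)"
    and "lq_powsum q (bidiag c v) \<le> 2 powr q * (1 + (C * r) powr q) * lq_powsum q v"
proof -
  let ?A = "(C * r) powr q"
  have le: "norm (c n * v (n + 1)) powr q \<le> ?A * norm (v (n + 1)) powr q" for n
  proof -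
    have "norm (c n * v (n + 1)) powr q = norm (c n) powr q * norm (v (n + 1)) powr q"
      by (simp add: norm_mult powr_mult)
    also have "\<dots> \<le> ?A * norm (v (n + 1)) powr q"
      by (intro mult_right_mono powr_mono2 norm_c_le) (use q in auto)
    finally show ?thesis .
  qed
  have shift: "in_lq q (\<lambda>n. c n * v (n + 1))"
    and shift_le: "lq_powsum q (\<lambda>n. c n * v (n + 1)) \<le> ?A * lq_powsum q v"
  proof -
    show "in_lq q (\<lambda>n. c n * v (n + 1))" by (rule in_lq_comparison(1)[OF in_lq_shift(1)[OF v] le])
    have "lq_powsum q (\<lambda>n. c n * v (n + 1)) \<le> ?A * lq_powsum q (\<lambda>n. v (n + 1))"
      by (rule in_lq_comparison(2)[OF in_lq_shift(1)[OF v] le])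
    also have "\<dots> \<le> ?A * lq_powsum q v" by (intro mult_left_mono in_lq_shift(2)[OF v]) auto
    finally show "lq_powsum q (\<lambda>n. c n * v (n + 1)) \<le> ?A * lq_powsum q v" .
  qed
  have eq: "bidiag c v = (\<lambda>n. v n + c n * v (n + 1))" by (auto simp: bidiag_def)
  show "in_lq q (bidiag c v)" unfolding eq by (rule in_lq_add(1)[OF q v shift])
  have "lq_powsum q (bidiag c v) \<le> 2 powr q * (lq_powsum q v + lq_powsum q (\<lambda>n. c n * v (n + 1)))"
    unfolding eq by (rule in_lq_add(2)[OF q v shift])
  also have "\<dots> \<le> 2 powr q * (lq_powsum q v + ?A * lq_powsum q v)"
    using shift_le by (intro mult_left_mono add_left_mono) auto
  finally show "lq_powsum q (bidiag c v) \<le> 2 powr q * (1 + ?A) * lq_powsum q v"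
    by (simp add: algebra_simps)
qed

end

lemma norm_prod_le_geometric:
  fixes c :: "nat \<Rightarrow> complex"
  assumes r: "r > 0" and L: "\<And>n. L \<le> n \<Longrightarrow> norm (c n) \<le> r"
  shows "norm (\<Prod>l<k. c (i + l)) \<le> (\<Prod>n<L. max 1 (norm (c n) / r)) * r ^ k"
proof -
  define h where "h n = max 1 (norm (c n) / r)" for n
  have h_ge_1: "1 \<le> h n" for n unfolding h_def by simp
  have "norm (\<Prod>l<k. c (i + l)) \<le> (\<Prod>l<k. r * h (i + l))"
    unfolding prod_norm[symmetric] using r
    by (intro prod_mono) (auto simp: h_def field_simps max_def)
  also have "\<dots> = r ^ k * prod h {i..<k + i}"
    using prod.shift_bounds_nat_ivl[of h 0 i k] by (simp add: prod.distrib atLeast0LessThan add.commute)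
  also have "prod h {i..<k + i} = prod h ({i..<k + i} \<inter> {..<L})"
  proof (rule prod.mono_neutral_right)
    have "h n = 1" if "n \<notin> {..<L}" for n using L[of n] that r by (simp add: h_def)
    then show "\<forall>n\<in>{i..<k + i} - {i..<k + i} \<inter> {..<L}. h n = 1" by blast
  qed auto
  also have "\<dots> \<le> prod h {..<L}"
    using h_ge_1 by (intro prod_mono2) (auto intro: order_trans[OF zero_le_one])
  finally show ?thesis using r by (simp add: h_def mult.commute mult_left_mono)
qed

lemma limsup_less_one_imp_geometric_products:
  fixes c :: "nat \<Rightarrow> complex"
  assumes "limsup (\<lambda>n. ereal (norm (c n))) < 1"
  obtains C r where "geometric_products c C r"
proof -
  obtain r0 where r0: "limsup (\<lambda>n. ereal (norm (c n))) < ereal r0" "r0 < 1"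
    using ereal_dense2[OF assms] by auto
  obtain L where L: "\<And>n. L \<le> n \<Longrightarrow> norm (c n) < r0"
    using Limsup_lessD[OF r0(1)] unfolding eventually_sequentially by auto
  define r where "r = max r0 (1 / 2)"
  have "geometric_products c (\<Prod>n<L. max 1 (norm (c n) / r)) r"
  proof
    show "0 < r" "r < 1" using r0 unfolding r_def by auto
    show "norm (\<Prod>l<k. c (i + l)) \<le> (\<Prod>n<L. max 1 (norm (c n) / r)) * r ^ k" for i k
      using L by (intro norm_prod_le_geometric) (auto simp: r_def intro: less_imp_le max.coboundedI1)
  qed
  then show ?thesis by (rule that)
qed

section \<open>Weighted backward shifts\<close>

lemma unbounded_beyond:
  fixes f :: "nat \<Rightarrow> real"
  assumes "\<not> bdd_above (range f)"
  shows "\<exists>n\<ge>L. K \<le> f n"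
proof (rule ccontr)
  assume "\<not> ?thesis"
  then have "f n \<le> max K (Max (f ` {..<L}))" for n
    by (cases "n < L") (auto simp: not_le intro: max.coboundedI2)
  then show False using assms by (auto simp: bdd_above_def)
qed

definition wbshift :: "(nat \<Rightarrow> complex) \<Rightarrow> (nat \<Rightarrow> complex) \<Rightarrow> nat \<Rightarrow> complex" where
  "wbshift \<beta> v n = \<beta> n * v (Suc n)"

definition weight_prod :: "(nat \<Rightarrow> complex) \<Rightarrow> nat \<Rightarrow> nat \<Rightarrow> complex" where
  "weight_prod \<beta> n m = (\<Prod>l<m. \<beta> (n + l))"

lemma weight_prod_0 [simp]: "weight_prod \<beta> n 0 = 1"
  by (simp add: weight_prod_def)

lemma weight_prod_Suc: "weight_prod \<beta> n (Suc m) = \<beta> n * weight_prod \<beta> (Suc n) m"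
  unfolding weight_prod_def by (subst prod.lessThan_Suc_shift) simp

lemma weight_prod_add: "weight_prod \<beta> n (k + m) = weight_prod \<beta> n k * weight_prod \<beta> (n + k) m"
  by (induction m) (simp_all add: weight_prod_def add.assoc)

lemma wbshift_power: "(wbshift \<beta> ^^ m) v n = weight_prod \<beta> n m * v (n + m)"
  by (induction m arbitrary: n) (simp_all add: wbshift_def weight_prod_Suc)

definition wbshift_power_rinv :: "(nat \<Rightarrow> complex) \<Rightarrow> nat \<Rightarrow> (nat \<Rightarrow> complex) \<Rightarrow> nat \<Rightarrow> complex" where
  "wbshift_power_rinv \<beta> m v k =
     (if m \<le> k then v (k - m) * weight_prod \<beta> 0 (k - m) / weight_prod \<beta> 0 k else 0)"

lemma wbshift_power_rinv_nonzero:
  "wbshift_power_rinv \<beta> m v k \<noteq> 0 \<Longrightarrow> m \<le> k \<and> v (k - m) \<noteq> 0"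
  by (auto simp: wbshift_power_rinv_def split: if_splits)

locale weighted_shift =
  fixes \<beta> :: "nat \<Rightarrow> complex" and M :: real
  assumes \<beta>_nonzero: "\<And>n. \<beta> n \<noteq> 0"
    and norm_\<beta>_le: "\<And>n. norm (\<beta> n) \<le> M"
    and M_ge_1: "1 \<le> M"
begin

lemma weight_prod_nonzero: "weight_prod \<beta> n m \<noteq> 0"
  by (simp add: weight_prod_def \<beta>_nonzero)

lemma norm_weight_prod_le: "norm (weight_prod \<beta> n m) \<le> M ^ m"
  unfolding weight_prod_def prod_norm[symmetric]
  using prod_mono[of "{..<m}" "\<lambda>l. norm (\<beta> (n + l))" "\<lambda>_. M"] norm_\<beta>_le by simp

lemma wbshift_power_rinv_right_inverse: "(wbshift \<beta> ^^ m) (wbshift_power_rinv \<beta> m v) = v"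
proof
  show "(wbshift \<beta> ^^ m) (wbshift_power_rinv \<beta> m v) n = v n" for n
    using weight_prod_nonzero[of 0 n] weight_prod_nonzero[of n m]
    by (simp add: wbshift_power wbshift_power_rinv_def weight_prod_add[of \<beta> 0 n m])
qed

lemma in_lq_wbshift_power:
  assumes q: "q > 0" and v: "in_lq q v"
  shows "in_lq q ((wbshift \<beta> ^^ m) v)"
    and "lq_powsum q ((wbshift \<beta> ^^ m) v) \<le> (M ^ m) powr q * lq_powsum q v"
proof -
  have le: "norm ((wbshift \<beta> ^^ m) v n) powr q \<le> (M ^ m) powr q * norm (v (n + m)) powr q" for n
    unfolding wbshift_power norm_mult powr_mult
    by (intro mult_right_mono powr_mono2 norm_weight_prod_le) (use q in auto)
  show "in_lq q ((wbshift \<beta> ^^ m) v)" by (rule in_lq_comparison(1)[OF in_lq_shift(1)[OF v] le])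
  have "lq_powsum q ((wbshift \<beta> ^^ m) v) \<le> (M ^ m) powr q * lq_powsum q (\<lambda>n. v (n + m))"
    by (rule in_lq_comparison(2)[OF in_lq_shift(1)[OF v] le])
  also have "\<dots> \<le> (M ^ m) powr q * lq_powsum q v"
    by (intro mult_left_mono in_lq_shift(2)[OF v]) auto
  finally show "lq_powsum q ((wbshift \<beta> ^^ m) v) \<le> (M ^ m) powr q * lq_powsum q v" .
qed

lemma wbshift_power_tendsto_zero:
  assumes bdd: "bdd_above (range (\<lambda>n. norm (weight_prod \<beta> 0 n)))" and z: "z \<longlonglongrightarrow> 0"
  shows "(\<lambda>m. (wbshift \<beta> ^^ m) z n) \<longlonglongrightarrow> 0"
proof -
  obtain K where K: "\<And>m. norm (weight_prod \<beta> 0 m) \<le> K"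
    using bdd by (auto simp: bdd_above_def)
  have "norm (weight_prod \<beta> n m) \<le> K / norm (weight_prod \<beta> 0 n)" for m
    using K[of "n + m"] weight_prod_nonzero[of 0 n]
    unfolding weight_prod_add[of \<beta> 0 n m] by (simp add: norm_mult field_simps)
  then have le: "norm ((wbshift \<beta> ^^ m) z n) \<le> K / norm (weight_prod \<beta> 0 n) * norm (z (m + n))" for m
    unfolding wbshift_power norm_mult add.commute[of n m] by (rule mult_right_mono) simp
  have lim: "(\<lambda>m. K / norm (weight_prod \<beta> 0 n) * norm (z (m + n))) \<longlonglongrightarrow> 0"
    using LIMSEQ_ignore_initial_segment[OF z, of n]
    by (intro tendsto_mult_right_zero) (simp add: tendsto_norm_zero_iff)
  show ?thesis by (rule Lim_null_comparison[OF _ lim]) (rule always_eventually, use le in blast)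
qed

lemma weight_prod_large_on_window:
  assumes unbdd: "\<not> bdd_above (range (\<lambda>n. norm (weight_prod \<beta> 0 n)))"
  shows "\<exists>m\<ge>L. \<forall>k<D. K \<le> norm (weight_prod \<beta> 0 (k + m))"
proof -
  obtain n where n: "L + D \<le> n" "K * M ^ D \<le> norm (weight_prod \<beta> 0 n)"
    using unbounded_beyond[OF unbdd] by blast
  have "K \<le> norm (weight_prod \<beta> 0 (k + (n - D)))" if k: "k < D" for k
  proof -
    have "norm (weight_prod \<beta> 0 n)
        = norm (weight_prod \<beta> 0 (k + (n - D))) * norm (weight_prod \<beta> (k + (n - D)) (D - k))"
      using weight_prod_add[of \<beta> 0 "k + (n - D)" "D - k"] n(1) k by (simp add: norm_mult)
    also have "\<dots> \<le> norm (weight_prod \<beta> 0 (k + (n - D))) * M ^ D"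
      using norm_weight_prod_le[of "k + (n - D)" "D - k"] power_increasing[of "D - k" D M] M_ge_1
      by (intro mult_left_mono) auto
    finally have "K * M ^ D \<le> norm (weight_prod \<beta> 0 (k + (n - D))) * M ^ D" using n(2) by linarith
    then show ?thesis using M_ge_1 by (simp add: mult_le_cancel_right_pos)
  qed
  then show ?thesis using n(1) by (intro exI[of _ "n - D"]) auto
qed

lemma wbshift_power_rinv_small:
  assumes unbdd: "\<not> bdd_above (range (\<lambda>n. norm (weight_prod \<beta> 0 n)))"
    and q: "q > 0" and supp: "\<And>n. D \<le> n \<Longrightarrow> v n = 0" and \<delta>: "\<delta> > 0"
  shows "\<exists>m\<ge>L. in_lq q (wbshift_power_rinv \<beta> m v) \<and> lq_powsum q (wbshift_power_rinv \<beta> m v) \<le> \<delta>"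
proof -
  define A where "A = (\<Sum>k<D. norm (v k * weight_prod \<beta> 0 k) powr q)"
  have A: "A \<ge> 0" unfolding A_def by (intro sum_nonneg) auto
  define K where "K = ((A + 1) / \<delta>) powr (1 / q)"
  have K: "K > 0" and Kq: "K powr q = (A + 1) / \<delta>"
    unfolding K_def using A \<delta> q by (auto simp: powr_powr)
  obtain m where m: "L \<le> m" and large: "\<And>k. k < D \<Longrightarrow> K \<le> norm (weight_prod \<beta> 0 (k + m))"
    using weight_prod_large_on_window[OF unbdd] by blast
  let ?x = "wbshift_power_rinv \<beta> m v"
  have x_supp: "?x k = 0" if "k \<notin> {m..<m + D}" for k
    using that supp[of "k - m"] wbshift_power_rinv_nonzero[of \<beta> m v k] by force
  have "lq_powsum q ?x = (\<Sum>k\<in>{m..<m + D}. norm (?x k) powr q)"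
    by (rule in_lq_finite_support(2)[OF _ x_supp]) simp
  also have "\<dots> = (\<Sum>k<D. norm (?x (k + m)) powr q)"
    by (rule sum.reindex_bij_witness[of _ "\<lambda>k. k + m" "\<lambda>k. k - m"]) auto
  also have "\<dots> \<le> (\<Sum>k<D. norm (v k * weight_prod \<beta> 0 k) powr q / K powr q)"
  proof (rule sum_mono)
    fix k assume "k \<in> {..<D}"
    then have "K powr q \<le> norm (weight_prod \<beta> 0 (k + m)) powr q"
      using large[of k] K q by (intro powr_mono2) auto
    moreover have "0 < norm (weight_prod \<beta> 0 (k + m)) powr q * K powr q"
      using K weight_prod_nonzero[of 0 "k + m"] by simp
    ultimately have "norm (v k * weight_prod \<beta> 0 k) powr q / norm (weight_prod \<beta> 0 (k + m)) powr q
        \<le> norm (v k * weight_prod \<beta> 0 k) powr q / K powr q"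
      by (intro divide_left_mono) auto
    then show "norm (?x (k + m)) powr q \<le> norm (v k * weight_prod \<beta> 0 k) powr q / K powr q"
      by (simp add: wbshift_power_rinv_def norm_divide powr_divide)
  qed
  also have "\<dots> = A * \<delta> / (A + 1)"
    unfolding A_def sum_divide_distrib[symmetric] Kq using A \<delta> by (simp add: field_simps)
  also have "\<dots> \<le> \<delta>" using A \<delta> by (simp add: field_simps)
  finally have "lq_powsum q ?x \<le> \<delta>" .
  moreover have "in_lq q ?x" by (rule in_lq_finite_support(1)[of "{m..<m + D}"]) (use x_supp in auto)
  ultimately show ?thesis using m by (intro exI[of _ m]) simp
qed

lemma wbshift_power_rinv_sequence:
  fixes E :: "nat \<Rightarrow> nat \<Rightarrow> complex" and D :: "nat \<Rightarrow> nat"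
  assumes unbdd: "\<not> bdd_above (range (\<lambda>n. norm (weight_prod \<beta> 0 n)))"
    and q: "q > 0" and supp: "\<And>j n. D j \<le> n \<Longrightarrow> E j n = 0"
  obtains m where "\<And>j. in_lq q (wbshift_power_rinv \<beta> (m j) (E j))"
    and "\<And>j. m j + D j \<le> m (Suc j)"
    and "\<And>j. (M ^ m j) powr q * lq_powsum q (wbshift_power_rinv \<beta> (m (Suc j)) (E (Suc j)))
      \<le> (1 / 2) ^ Suc j"
proof -
  let ?x = "\<lambda>j m. wbshift_power_rinv \<beta> m (E j)"
  let ?Q = "\<lambda>j m m'. m + D j \<le> m' \<and> (M ^ m) powr q * lq_powsum q (?x (Suc j) m') \<le> (1 / 2) ^ Suc j"
  have "\<exists>m\<ge>0. in_lq q (?x 0 m) \<and> lq_powsum q (?x 0 m) \<le> 1"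
    by (rule wbshift_power_rinv_small[OF unbdd q]) (use supp in auto)
  then have "\<exists>m. in_lq q (?x 0 m)" by auto
  moreover have "\<exists>m'. in_lq q (?x (Suc j) m') \<and> ?Q j m m'" for j m
  proof -
    have pos: "0 < (M ^ m) powr q" using M_ge_1 by simp
    have "\<exists>m'\<ge>m + D j. in_lq q (?x (Suc j) m') \<and>
        lq_powsum q (?x (Suc j) m') \<le> (1 / 2) ^ Suc j / (M ^ m) powr q"
      by (rule wbshift_power_rinv_small[OF unbdd q]) (use supp pos in auto)
    then show ?thesis using pos by (auto simp: field_simps)
  qed
  ultimately obtain m where "\<And>j. in_lq q (?x j (m j)) \<and> ?Q j (m j) (m (Suc j))"
    using dependent_nat_choice[of "\<lambda>j m. in_lq q (?x j m)" ?Q] by blast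
  then show ?thesis by (intro that) auto
qed

end

text \<open>Salas' construction: the hypercyclic vector is block_tail 0, the sum of the disjointly
  supported blocks x j.\<close>
locale wbshift_blocks = weighted_shift \<beta> M for \<beta> M +
  fixes q :: real and x :: "nat \<Rightarrow> nat \<Rightarrow> complex" and m :: "nat \<Rightarrow> nat"
  assumes q: "q > 0"
    and m_mono: "mono m"
    and block_supp: "\<And>j k. x j k \<noteq> 0 \<Longrightarrow> m j \<le> k \<and> k < m (Suc j)"
    and in_lq_block: "\<And>j. in_lq q (x j)"
    and block_small: "\<And>j. (M ^ m j) powr q * lq_powsum q (x (Suc j)) \<le> (1 / 2) ^ Suc j"
begin

definition block_tail :: "nat \<Rightarrow> nat \<Rightarrow> complex" where
  "block_tail j k = (\<Sum>i. x (i + j) k)"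

lemma block_zero_below: "i < j \<Longrightarrow> m j \<le> k \<Longrightarrow> x i k = 0"
  using block_supp[of i k] monoD[OF m_mono, of "Suc i" j] by fastforce

lemma blocks_disjoint: "x i k \<noteq> 0 \<Longrightarrow> x j k \<noteq> 0 \<Longrightarrow> i = j"
  using block_zero_below[of i j k] block_zero_below[of j i k] block_supp
  by (cases i j rule: linorder_cases) auto

lemma M_power_powr_ge_1: "1 \<le> (M ^ n) powr q"
  using M_ge_1 q by (simp add: ge_one_powr_ge_zero)

lemma block_powsum_le:
  assumes "j < i"
  shows "(M ^ m j) powr q * lq_powsum q (x i) \<le> (1 / 2) ^ i"
proof -
  obtain i' where i': "i = Suc i'" "j \<le> i'" using assms by (cases i) auto
  have "(M ^ m j) powr q \<le> (M ^ m i') powr q"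
    using M_ge_1 q monoD[OF m_mono i'(2)] by (intro powr_mono2 power_increasing) auto
  then have "(M ^ m j) powr q * lq_powsum q (x i) \<le> (M ^ m i') powr q * lq_powsum q (x i)"
    using lq_powsum_nonneg[OF in_lq_block] by (intro mult_right_mono) auto
  also have "\<dots> \<le> (1 / 2) ^ i" using block_small[of i'] i' by simp
  finally show ?thesis .
qed

lemma summable_block_powsum: "summable (\<lambda>i. lq_powsum q (x (i + j)))"
proof (rule summable_comparison_test'[OF summable_geometric[of "1 / 2"]])
  fix i :: nat assume "1 \<le> i"
  have "1 * lq_powsum q (x (i + j)) \<le> (M ^ m 0) powr q * lq_powsum q (x (i + j))"
    using lq_powsum_nonneg[OF in_lq_block] by (intro mult_right_mono M_power_powr_ge_1)
  also have "\<dots> \<le> (1 / 2) ^ (i + j)" using \<open>1 \<le> i\<close> by (intro block_powsum_le) simp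
  also have "\<dots> \<le> (1 / 2) ^ i" by (intro power_decreasing) auto
  finally show "norm (lq_powsum q (x (i + j))) \<le> (1 / 2) ^ i"
    using lq_powsum_nonneg[OF in_lq_block] by simp
qed simp

lemma in_lq_block_tail: "in_lq q (block_tail j)"
  and lq_powsum_block_tail_le: "lq_powsum q (block_tail j) \<le> (\<Sum>i. lq_powsum q (x (i + j)))"
proof -
  have disj: "i = i'" if "x (i + j) k \<noteq> 0" "x (i' + j) k \<noteq> 0" for i i' k
    using blocks_disjoint[OF that] by simp
  note tail = in_lq_disjoint_suminf[where x = "\<lambda>i. x (i + j)", OF _ in_lq_block summable_block_powsum]
  show "in_lq q (block_tail j)" unfolding block_tail_def by (rule tail(1)) (rule disj)
  show "lq_powsum q (block_tail j) \<le> (\<Sum>i. lq_powsum q (x (i + j)))"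
    unfolding block_tail_def by (rule tail(2)) (rule disj)
qed

lemma block_tail_small: "(M ^ m j) powr q * lq_powsum q (block_tail (Suc j)) \<le> (1 / 2) ^ j"
proof -
  have geom: "summable (\<lambda>i. (1 / 2 :: real) ^ (i + Suc j))"
    by (rule summable_ignore_initial_segment[OF summable_geometric]) simp
  have "(M ^ m j) powr q * lq_powsum q (block_tail (Suc j))
      \<le> (M ^ m j) powr q * (\<Sum>i. lq_powsum q (x (i + Suc j)))"
    by (rule mult_left_mono[OF lq_powsum_block_tail_le]) simp
  also have "\<dots> = (\<Sum>i. (M ^ m j) powr q * lq_powsum q (x (i + Suc j)))"
    by (rule suminf_mult[OF summable_block_powsum, symmetric])
  also have "\<dots> \<le> (\<Sum>i. (1 / 2) ^ (i + Suc j))"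
    by (rule suminf_le[OF _ summable_mult[OF summable_block_powsum] geom]) (rule block_powsum_le, simp)
  also have "\<dots> = (1 / 2) ^ j"
  proof -
    have "(\<lambda>i. (1 / 2 :: real) ^ i * (1 / 2) ^ Suc j) sums (1 / (1 - 1 / 2) * (1 / 2) ^ Suc j)"
      by (intro sums_mult2 geometric_sums) simp
    then show ?thesis by (simp add: power_add sums_iff)
  qed
  finally show ?thesis .
qed

lemma wbshift_power_block_tail:
  "(wbshift \<beta> ^^ m j) (block_tail 0) - (wbshift \<beta> ^^ m j) (x j) = (wbshift \<beta> ^^ m j) (block_tail (Suc j))"
proof
  fix n
  have "block_tail 0 (n + m j) = x j (n + m j) + block_tail (Suc j) (n + m j)"
    unfolding block_tail_def add_0_right
    by (rule suminf_disjoint_split) (auto intro: blocks_disjoint block_zero_below)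
  then show "((wbshift \<beta> ^^ m j) (block_tail 0) - (wbshift \<beta> ^^ m j) (x j)) n
      = (wbshift \<beta> ^^ m j) (block_tail (Suc j)) n"
    by (simp add: wbshift_power ring_distribs)
qed

lemma wbshift_power_block_sum:
  shows "in_lq q ((wbshift \<beta> ^^ m j) (block_tail 0) - (wbshift \<beta> ^^ m j) (x j))"
    and "lq_powsum q ((wbshift \<beta> ^^ m j) (block_tail 0) - (wbshift \<beta> ^^ m j) (x j)) \<le> (1 / 2) ^ j"
  unfolding wbshift_power_block_tail
  using in_lq_wbshift_power(1)[OF q in_lq_block_tail]
    order_trans[OF in_lq_wbshift_power(2)[OF q in_lq_block_tail] block_tail_small] by blast+

end

context weighted_shift
begin

lemma wbshift_approximating_vector:
  fixes E :: "nat \<Rightarrow> nat \<Rightarrow> complex" and D :: "nat \<Rightarrow> nat"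
  assumes unbdd: "\<not> bdd_above (range (\<lambda>n. norm (weight_prod \<beta> 0 n)))"
    and q: "q > 0" and supp: "\<And>j n. D j \<le> n \<Longrightarrow> E j n = 0"
  obtains y m where "in_lq q y"
    and "\<And>j. in_lq q ((wbshift \<beta> ^^ m j) y - E j)"
    and "\<And>j. lq_powsum q ((wbshift \<beta> ^^ m j) y - E j) \<le> (1 / 2) ^ j"
proof -
  obtain m where x_lq: "\<And>j. in_lq q (wbshift_power_rinv \<beta> (m j) (E j))"
    and m_gap: "\<And>j. m j + D j \<le> m (Suc j)"
    and x_small: "\<And>j. (M ^ m j) powr q * lq_powsum q (wbshift_power_rinv \<beta> (m (Suc j)) (E (Suc j)))
      \<le> (1 / 2) ^ Suc j"
    using wbshift_power_rinv_sequence[where E = E and D = D, OF unbdd q supp] by metis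
  define x where "x j = wbshift_power_rinv \<beta> (m j) (E j)" for j
  interpret wbshift_blocks \<beta> M q x m
  proof
    have "m j \<le> m (Suc j)" for j using m_gap[of j] by simp
    then show "mono m" by (simp add: mono_iff_le_Suc)
    show "m j \<le> k \<and> k < m (Suc j)" if "x j k \<noteq> 0" for j k
    proof -
      have "m j \<le> k" "E j (k - m j) \<noteq> 0"
        using that wbshift_power_rinv_nonzero[of \<beta> "m j" "E j" k] unfolding x_def by auto
      then show ?thesis using supp[of j "k - m j"] m_gap[of j] by linarith
    qed
  qed (use q x_lq x_small in \<open>simp_all add: x_def\<close>)
  have "(wbshift \<beta> ^^ m j) (x j) = E j" for j
    unfolding x_def by (rule wbshift_power_rinv_right_inverse)
  then show ?thesis using in_lq_block_tail wbshift_power_block_sum by (intro that) auto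
qed

theorem hypercyclic_wbshift:
  assumes q: "q > 0" and unbdd: "\<not> bdd_above (range (\<lambda>n. norm (weight_prod \<beta> 0 n)))"
  shows "hypercyclic_lq q (wbshift \<beta>)"
proof -
  obtain D and E :: "nat \<Rightarrow> nat \<Rightarrow> complex" where supp: "\<And>j n. D j \<le> n \<Longrightarrow> E j n = 0"
    and dense: "\<And>z \<epsilon> J. in_lq q z \<Longrightarrow> \<epsilon> > 0 \<Longrightarrow>
      \<exists>j\<ge>J. in_lq q (E j - z) \<and> lq_powsum q (E j - z) < \<epsilon>"
    using finitely_supported_dense_enumeration[OF q] by metis
  obtain y m where y: "in_lq q y"
    and orbit: "\<And>j. in_lq q ((wbshift \<beta> ^^ m j) y - E j)"
    and orbit_le: "\<And>j. lq_powsum q ((wbshift \<beta> ^^ m j) y - E j) \<le> (1 / 2) ^ j"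
    using wbshift_approximating_vector[where E = E and D = D, OF unbdd q supp] by metis
  show ?thesis
  proof (rule hypercyclic_lqI[OF q y])
    fix z :: "nat \<Rightarrow> complex" and \<epsilon> :: real
    assume z: "in_lq q z" and \<epsilon>: "\<epsilon> > 0"
    define \<eta> where "\<eta> = \<epsilon> / (2 * 2 powr q)"
    have \<eta>: "\<eta> > 0" unfolding \<eta>_def using \<epsilon> by simp
    obtain J where J: "(1 / 2) ^ J < \<eta>" using real_arch_pow_inv[OF \<eta>, of "1 / 2"] by auto
    obtain j where j: "J \<le> j" "in_lq q (E j - z)" "lq_powsum q (E j - z) < \<eta>"
      using dense[OF z \<eta>] by blast
    have "(1 / 2 :: real) ^ j \<le> (1 / 2) ^ J" using j(1) by (intro power_decreasing) auto
    then have small: "lq_powsum q ((wbshift \<beta> ^^ m j) y - E j) < \<eta>" using orbit_le[of j] J by linarith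
    have split: "(wbshift \<beta> ^^ m j) y - z = (\<lambda>n. ((wbshift \<beta> ^^ m j) y - E j) n + (E j - z) n)"
      by auto
    have "in_lq q ((wbshift \<beta> ^^ m j) y - z)"
      unfolding split by (rule in_lq_add(1)[OF q orbit j(2)])
    moreover have "lq_powsum q ((wbshift \<beta> ^^ m j) y - z) < \<epsilon>"
    proof -
      have "lq_powsum q ((wbshift \<beta> ^^ m j) y - z)
          \<le> 2 powr q * (lq_powsum q ((wbshift \<beta> ^^ m j) y - E j) + lq_powsum q (E j - z))"
        unfolding split by (rule in_lq_add(2)[OF q orbit j(2)])
      also have "\<dots> < 2 powr q * (\<eta> + \<eta>)" using small j(3) by simp
      also have "\<dots> = \<epsilon>" unfolding \<eta>_def by simp
      finally show ?thesis .
    qed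
    ultimately show "\<exists>\<nu>. in_lq q ((wbshift \<beta> ^^ \<nu>) y - z) \<and>
        lq_powsum q ((wbshift \<beta> ^^ \<nu>) y - z) < \<epsilon>"
      by blast
  qed
qed

end

section \<open>The adjoint of the weighted forward shift\<close>

lemma abcoord_eq:
  assumes a: "\<And>n. a n \<noteq> 0" and c: "\<And>n. c n = b n / a (Suc n)"
  shows "abcoord a b \<mu> j = (\<Sum>i\<le>j. \<mu> i / a i * bidiag_inv_coeff c i (j - i))"
proof (induction j)
  case (Suc j)
  have "(\<Sum>i\<le>j. \<mu> i / a i * bidiag_inv_coeff c i (Suc j - i))
      = - c j * (\<Sum>i\<le>j. \<mu> i / a i * bidiag_inv_coeff c i (j - i))"
    unfolding sum_distrib_left
    by (intro sum.cong) (auto simp: Suc_diff_le bidiag_inv_coeff_Suc')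
  then show ?case
    using Suc a[of "Suc j"] by (simp add: c[of j] diff_divide_distrib algebra_simps)
qed simp

context geometric_products
begin

lemma bidiag_inv_sums:
  assumes "Bseq u"
  shows "(\<lambda>j. if i \<le> j then bidiag_inv_coeff c i (j - i) * u j else 0) sums bidiag_inv c u i"
proof -
  have "(\<lambda>k. bidiag_inv_coeff c i k * u (i + k)) sums bidiag_inv c u i"
    unfolding bidiag_inv_def by (rule summable_sums[OF summable_norm_cancel[OF bidiag_inv_summable[OF assms]]])
  then have "(\<lambda>k. if i \<le> k + i then bidiag_inv_coeff c i (k + i - i) * u (k + i) else 0) sums bidiag_inv c u i"
    by (simp add: add.commute)
  then show ?thesis by (subst (asm) sums_zero_iff_shift) auto
qed

text \<open>The coordinate map is lower triangular with the coefficients of bidiag_inv c as entries,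
  so pairing the coordinates of mu with u amounts to pairing mu with bidiag_inv c u.\<close>
lemma dualpair_eq:
  assumes a: "\<And>n. a n \<noteq> 0" and c: "\<And>n. c n = b n / a (Suc n)"
    and S: "finite S" "\<And>i. i \<notin> S \<Longrightarrow> \<mu> i = 0" and u: "Bseq u"
  shows "dualpair a b \<mu> u = (\<Sum>i\<in>S. \<mu> i / a i * bidiag_inv c u i)"
proof -
  let ?t = "\<lambda>i j. if i \<le> j then bidiag_inv_coeff c i (j - i) * u j else 0"
  have "abcoord a b \<mu> j * u j = (\<Sum>i\<in>S. \<mu> i / a i * ?t i j)" for j
  proof -
    have "abcoord a b \<mu> j = (\<Sum>i\<in>S \<inter> {..j}. \<mu> i / a i * bidiag_inv_coeff c i (j - i))"
      unfolding abcoord_eq[where a = a and b = b and c = c, OF a c] using S by (intro sum.mono_neutral_right) auto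
    also have "\<dots> = (\<Sum>i\<in>S. if i \<le> j then \<mu> i / a i * bidiag_inv_coeff c i (j - i) else 0)"
      by (simp only: sum.inter_restrict[OF S(1)] atMost_iff)
    finally have "abcoord a b \<mu> j =
        (\<Sum>i\<in>S. if i \<le> j then \<mu> i / a i * bidiag_inv_coeff c i (j - i) else 0)" .
    then show ?thesis by (simp add: sum_distrib_right) (intro sum.cong, auto)
  qed
  moreover have "(\<lambda>j. \<Sum>i\<in>S. \<mu> i / a i * ?t i j) sums (\<Sum>i\<in>S. \<mu> i / a i * bidiag_inv c u i)"
    by (intro sums_sum sums_mult bidiag_inv_sums u)
  ultimately show ?thesis unfolding dualpair_def by (simp add: sums_iff)
qed

lemma Fw_adj_eq:
  assumes a: "\<And>n. a n \<noteq> 0" and c: "\<And>n. c n = b n / a (Suc n)" and u: "Bseq u"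
  shows "Fw_adj a b w u = bidiag c (wbshift (\<lambda>n. w n * a n / a (Suc n)) (bidiag_inv c u))"
proof
  fix n
  have "Fw_adj a b w u n = (\<Sum>i\<in>{Suc n, Suc (Suc n)}. Fw w (fcoef a b n) i / a i * bidiag_inv c u i)"
    unfolding Fw_adj_def by (rule dualpair_eq[OF a c _ _ u]) (auto simp: Fw_def fcoef_def)
  also have "\<dots> = bidiag c (wbshift (\<lambda>n. w n * a n / a (Suc n)) (bidiag_inv c u)) n"
    using a[of "Suc n"] by (simp add: Fw_def fcoef_def bidiag_def wbshift_def c mult_ac)
  finally show "Fw_adj a b w u n = bidiag c (wbshift (\<lambda>n. w n * a n / a (Suc n)) (bidiag_inv c u)) n" .
qed

lemma Fw_adj_bidiag:
  assumes a: "\<And>n. a n \<noteq> 0" and c: "\<And>n. c n = b n / a (Suc n)" and q: "q > 0" and z: "in_lq q z"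
  shows "Fw_adj a b w (bidiag c z) = bidiag c (wbshift (\<lambda>n. w n * a n / a (Suc n)) z)"
  using Fw_adj_eq[OF a c in_lq_Bseq[OF q in_lq_bidiag(1)[OF q z]]]
    bidiag_inv_bidiag[OF in_lq_LIMSEQ_zero[OF q z]]
  by simp

end

section \<open>Conjugacy to a weighted backward shift\<close>

locale wbshift_conjugate = geometric_products c C r + weighted_shift \<beta> M
  for c C r \<beta> M +
  fixes q :: real and T :: "(nat \<Rightarrow> complex) \<Rightarrow> nat \<Rightarrow> complex"
  assumes q: "q > 0"
    and T_bidiag: "\<And>z. in_lq q z \<Longrightarrow> T (bidiag c z) = bidiag c (wbshift \<beta> z)"
begin

lemma T_power_bidiag:
  assumes "in_lq q z"
  shows "(T ^^ \<nu>) (bidiag c z) = bidiag c ((wbshift \<beta> ^^ \<nu>) z)"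
proof (induction \<nu>)
  case (Suc \<nu>)
  have "in_lq q ((wbshift \<beta> ^^ \<nu>) z)" by (rule in_lq_wbshift_power(1)[OF q assms])
  then show ?case using Suc by (simp add: T_bidiag)
qed simp

lemma T_power_eq:
  assumes "in_lq q u"
  shows "(T ^^ \<nu>) u = bidiag c ((wbshift \<beta> ^^ \<nu>) (bidiag_inv c u))"
  using T_power_bidiag[OF in_lq_bidiag_inv[OF q assms]] bidiag_bidiag_inv[OF in_lq_Bseq[OF q assms]]
  by simp

lemma in_lq_T:
  assumes "in_lq q u"
  shows "in_lq q (T u)"
proof -
  have "in_lq q ((wbshift \<beta> ^^ 1) (bidiag_inv c u))"
    by (rule in_lq_wbshift_power(1)[OF q in_lq_bidiag_inv[OF q assms]])
  then show ?thesis using T_power_eq[OF assms, of 1] in_lq_bidiag(1)[OF q] by simp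
qed

lemma orbit_tendsto_zero:
  assumes bdd: "bdd_above (range (\<lambda>n. norm (weight_prod \<beta> 0 n)))" and u: "in_lq q u"
  shows "(\<lambda>\<nu>. (T ^^ \<nu>) u n) \<longlonglongrightarrow> 0"
proof -
  have z: "bidiag_inv c u \<longlonglongrightarrow> 0" by (rule in_lq_LIMSEQ_zero[OF q in_lq_bidiag_inv[OF q u]])
  have "(\<lambda>\<nu>. (wbshift \<beta> ^^ \<nu>) (bidiag_inv c u) n + c n * (wbshift \<beta> ^^ \<nu>) (bidiag_inv c u) (Suc n))
      \<longlonglongrightarrow> 0 + c n * 0"
    by (intro tendsto_intros wbshift_power_tendsto_zero[OF bdd z])
  then show ?thesis by (simp add: T_power_eq[OF u] bidiag_def)
qed

lemma hypercyclic_T: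
  assumes unbdd: "\<not> bdd_above (range (\<lambda>n. norm (weight_prod \<beta> 0 n)))"
  shows "hypercyclic_lq q T"
proof -
  define K where "K = 2 powr q * (1 + (C * r) powr q)"
  have K: "K > 0" unfolding K_def by (simp add: add_pos_nonneg)
  obtain y where y: "in_lq q y"
    and dense: "\<And>v \<epsilon>. in_lq q v \<Longrightarrow> \<epsilon> > 0 \<Longrightarrow> \<exists>\<nu>. lq_norm q ((wbshift \<beta> ^^ \<nu>) y - v) < \<epsilon>"
    using hypercyclic_wbshift[OF q unbdd] unfolding hypercyclic_lq_def by blast
  show ?thesis
  proof (rule hypercyclic_lqI[OF q in_lq_bidiag(1)[OF q y]])
    fix v :: "nat \<Rightarrow> complex" and \<epsilon> :: real
    assume v: "in_lq q v" and \<epsilon>: "\<epsilon> > 0"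
    define z where "z = bidiag_inv c v"
    have z: "in_lq q z" unfolding z_def by (rule in_lq_bidiag_inv[OF q v])
    have v_eq: "v = bidiag c z" unfolding z_def by (rule bidiag_bidiag_inv[OF in_lq_Bseq[OF q v], symmetric])
    have "0 < (\<epsilon> / K) powr (1 / q)" using \<epsilon> K by simp
    then obtain \<nu> where \<nu>: "lq_norm q ((wbshift \<beta> ^^ \<nu>) y - z) < (\<epsilon> / K) powr (1 / q)"
      using dense[OF z] by blast
    let ?d = "(wbshift \<beta> ^^ \<nu>) y - z"
    have d: "in_lq q ?d" by (rule in_lq_diff(1)[OF q in_lq_wbshift_power(1)[OF q y] z])
    have eq: "(T ^^ \<nu>) (bidiag c y) - v = bidiag c ?d"
      unfolding T_power_bidiag[OF y] v_eq by (auto simp: bidiag_def algebra_simps)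
    have "lq_powsum q ?d = lq_norm q ?d powr q"
      unfolding lq_norm_eq_powsum using q lq_powsum_nonneg[OF d] by (simp add: powr_powr)
    also have "\<dots> < ((\<epsilon> / K) powr (1 / q)) powr q"
      using \<nu> q by (intro powr_less_mono2) (auto simp: lq_norm_eq_powsum)
    also have "\<dots> = \<epsilon> / K" using q \<epsilon> K by (simp add: powr_powr)
    finally have "K * lq_powsum q ?d < \<epsilon>" using K by (simp add: field_simps)
    moreover have "lq_powsum q (bidiag c ?d) \<le> K * lq_powsum q ?d"
      unfolding K_def by (rule in_lq_bidiag(2)[OF q d])
    ultimately show "\<exists>\<nu>. in_lq q ((T ^^ \<nu>) (bidiag c y) - v) \<and>
        lq_powsum q ((T ^^ \<nu>) (bidiag c y) - v) < \<epsilon>"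
      using in_lq_bidiag(1)[OF q d] unfolding eq[symmetric] by (intro exI[of _ \<nu>]) simp
  qed
qed

theorem not_hypercyclic_iff_orbits_tendsto_zero:
  "\<not> hypercyclic_lq q T \<longleftrightarrow> (\<forall>u. in_lq q u \<longrightarrow> (\<forall>n. (\<lambda>\<nu>. (T ^^ \<nu>) u n) \<longlonglongrightarrow> 0))"
proof
  assume "\<not> hypercyclic_lq q T"
  then have "bdd_above (range (\<lambda>n. norm (weight_prod \<beta> 0 n)))" using hypercyclic_T by metis
  then show "\<forall>u. in_lq q u \<longrightarrow> (\<forall>n. (\<lambda>\<nu>. (T ^^ \<nu>) u n) \<longlonglongrightarrow> 0)"
    by (intro allI impI orbit_tendsto_zero)
next
  assume null: "\<forall>u. in_lq q u \<longrightarrow> (\<forall>n. (\<lambda>\<nu>. (T ^^ \<nu>) u n) \<longlonglongrightarrow> 0)"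
  show "\<not> hypercyclic_lq q T"
  proof
    assume "hypercyclic_lq q T"
    then obtain u where u: "in_lq q u" and unbdd: "\<not> Bseq (\<lambda>\<nu>. (T ^^ \<nu>) u 0)"
      using hypercyclic_lq_imp_unbounded_orbit[where T = T, OF q _ in_lq_T] by blast
    have "Bseq (\<lambda>\<nu>. (T ^^ \<nu>) u 0)"
      using null u by (intro convergent_imp_Bseq convergentI) blast
    then show False using unbdd by contradiction
  qed
qed

end

theorem mainTheorem11:
  fixes a b w :: "nat \<Rightarrow> complex" and p q :: real
  assumes "1 < p" and "1 / p + 1 / q = 1"
    and "\<And>n. a n \<noteq> 0" and "\<And>n. b n \<noteq> 0" and "\<And>n. w n \<noteq> 0"
    and "limsup (\<lambda>n. ereal ((norm (a n) + norm (b n)) powr (1 / real n))) < \<infinity>"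
    and "bdd_above (range (\<lambda>n. norm (w n * a n / a (Suc n))))"
    and "limsup (\<lambda>n. ereal (norm (b n / a (Suc n)))) < 1"
  shows "\<not> hypercyclic_lq q (Fw_adj a b w) \<longleftrightarrow>
         (\<forall>u. in_lq q u \<longrightarrow> (\<forall>n. (\<lambda>\<nu>. ((Fw_adj a b w) ^^ \<nu>) u n) \<longlonglongrightarrow> 0))"
proof -
  define c where "c n = b n / a (Suc n)" for n
  define \<beta> where "\<beta> = (\<lambda>n. w n * a n / a (Suc n))"
  have "1 / p < 1" using assms(1) by simp
  then have "0 < 1 / q" using assms(2) by linarith
  then have q: "q > 0" by simp
  have "limsup (\<lambda>n. ereal (norm (c n))) < 1" using assms(8) by (simp add: c_def)
  then obtain C r where geom: "geometric_products c C r"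
    by (rule limsup_less_one_imp_geometric_products)
  obtain M0 where "\<And>n. norm (\<beta> n) \<le> M0"
    using assms(7) unfolding \<beta>_def bdd_above_def by auto
  then have M: "\<And>n. norm (\<beta> n) \<le> max 1 M0" "1 \<le> max 1 M0" by (auto intro: max.coboundedI2)
  interpret wbshift_conjugate c C r \<beta> "max 1 M0" q "Fw_adj a b w"
  proof unfold_locales
    show "Fw_adj a b w (bidiag c z) = bidiag c (wbshift \<beta> z)" if "in_lq q z" for z
      unfolding \<beta>_def by (rule geometric_products.Fw_adj_bidiag[OF geom assms(3) c_def q that])
  qed (use geom q M assms(3,5) in \<open>auto simp: geometric_products_def \<beta>_def\<close>)
  show ?thesis by (rule not_hypercyclic_iff_orbits_tendsto_zero)
qed

end
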